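(* Let $U=U_1\times\cdots\times U_m\subset\mathbb{R}^m_+$ (each $U_i\subseteq\mathbb{R}$) be convex, $C\subseteq\mathbb{R}^m$, $\overline{U}=U\cap C$. Let $f_1:\mathbb{R}^{n_1}\to\mathbb{R}$, $f_2:\mathbb{R}^{n_2}\to\mathbb{R}$ be convex with $f_1(0)=f_2(0)=0$, and for each $i\in[m]$ let $g_i:\mathbb{R}^{n_1}\times\mathbb{R}^{n_2}\to\mathbb{R}$ be concave in $(x,y)$ with $g_i(0,0)\ge0$. For a set $S$ define $$z^{\rm ad}(S)=\inf_{x,\ y:S\to\mathbb{R}^{n_2}}\Big\{f_1(x)+\sup_{u\in S}f_2(y(u)):\ g_i(x,y(u))\ge u_i\ \forall u\in S,\ \forall i\Big\},$$ $$z^{\rm st}(S)=\inf_{x,y}\{f_1(x)+f_2(y):\ g_i(x,y)\ge u_i\ \forall u\in S,\ \forall i\},$$ and $z_{\rm aro}=z^{\rm ad}(U)$, $z_{\rm acp}=z^{\rm ad}(\overline{U})$, $z_{\rm ro}=z^{\rm st}(U)$, $z_{\rm cp}=z^{\rm st}(\overline{U})$. Let $\gamma_{\rm ro}=\gamma(U^\downarrow,\Pi(\overline{U}^\downarrow))$ and $\gamma_{\rm aro}=\gamma(U^\downarrow,\overline{U}^\downarrow)$. If $z_{\rm acp}>0$ and $z_{\rm ro}<\infty$, then $$\frac{z_{\rm cp}}{z_{\rm ro}}\le\gamma_{\rm ro},\qquad\frac{z_{\rm acp}}{z_{\rm aro}}\le\gamma_{\rm aro}.$$ Furthermore, the bounds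 are tight.
   Context: $[m]=\{1,\dots,m\}$. For $S\subseteq\mathbb{R}^m_+$, $S^\downarrow=\{t\in\mathbb{R}^m_+:\exists s\in S,\ t\le s\text{ componentwise}\}$. $\Pi_i(S)$ is the projection of $S$ onto coordinate $i$ and $\Pi(S)=\Pi_1(S)\times\cdots\times\Pi_m(S)$. For $r\ge0$, $rS=\{rx:x\in S\}$; $\gamma(S_1,S_2)=\min\{\gamma\ge0:S_2\subseteq\gamma S_1\}$. *)

theory Defs
  imports "HOL-Analysis.Analysis"
begin

definition down_closure :: "(real^'m) set \<Rightarrow> (real^'m) set" where
  "down_closure S = {t. (\<forall>i. 0 \<le> t $ i) \<and> (\<exists>s\<in>S. \<forall>i. t $ i \<le> s $ i)}"

definition proj_box :: "(real^'m) set \<Rightarrow> (real^'m) set" where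
  "proj_box S = {t. \<forall>i. t $ i \<in> (\<lambda>s. s $ i) ` S}"

definition gamma_scale :: "(real^'m) set \<Rightarrow> (real^'m) set \<Rightarrow> real" where
  "gamma_scale S1 S2 = Inf {r::real. 0 \<le> r \<and> S2 \<subseteq> (\<lambda>x. r *\<^sub>R x) ` S1}"

text \<open>Adaptive value z^ad(S): first-stage x, second-stage policy y : S -> R^n2.
  The infimum of the empty set is +infinity.\<close>
definition z_ad :: "(real^'n1 \<Rightarrow> real) \<Rightarrow> (real^'n2 \<Rightarrow> real)
    \<Rightarrow> ('m \<Rightarrow> real^'n1 \<Rightarrow> real^'n2 \<Rightarrow> real) \<Rightarrow> (real^'m) set \<Rightarrow> ereal" where
  "z_ad f1 f2 g S = Inf {ereal (f1 x) + (SUP u\<in>S. ereal (f2 (y u))) | x y.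
       \<forall>u\<in>S. \<forall>i. g i x (y u) \<ge> u $ i}"

definition z_st :: "(real^'n1 \<Rightarrow> real) \<Rightarrow> (real^'n2 \<Rightarrow> real)
    \<Rightarrow> ('m \<Rightarrow> real^'n1 \<Rightarrow> real^'n2 \<Rightarrow> real) \<Rightarrow> (real^'m) set \<Rightarrow> ereal" where
  "z_st f1 f2 g S = Inf {ereal (f1 x + f2 y) | x y. \<forall>u\<in>S. \<forall>i. g i x y \<ge> u $ i}"

definition admissible_data :: "(real^'n1 \<Rightarrow> real) \<Rightarrow> (real^'n2 \<Rightarrow> real)
    \<Rightarrow> ('m \<Rightarrow> real^'n1 \<Rightarrow> real^'n2 \<Rightarrow> real) \<Rightarrow> bool" where
  "admissible_data f1 f2 g \<longleftrightarrow>
     convex_on UNIV f1 \<and> convex_on UNIV f2 \<and> f1 0 = 0 \<and> f2 0 = 0 \<and>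
     (\<forall>i. concave_on UNIV (\<lambda>(x, y). g i x y)) \<and> (\<forall>i. g i 0 0 \<ge> 0)"

end

theory Submission
  imports Defs
begin

(* Everything comes from scaling.  Since f1, f2 are convex and the g_i concave with
   f1 0 = f2 0 = 0 <= g_i 0 0, multiplying a static or adaptive solution by r in [0, 1]
   gives a solution for any set whose points are dominated by r times points of U,
   at r times the cost.  If the downward closure of U \<inter> C lies in r times that of U,
   this applies to U \<inter> C with factor min r 1, so both ratios are bounded by every such r,
   hence by gamma_aro <= gamma_ro.
   For tightness take f1 = 0, f2 y = y_k and g_i x y = B_i y_k, where B_i is the supremum
   of the i-th coordinate over U: the value of U is at most 1, and every feasible level t
   for U \<inter> C confines U \<inter> C to the box t B, whose projection box lies in (t + e) times the
   downward closure of the product set U. *)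

lemma convex_on_scaleR_le:
  fixes f :: "'a::real_vector \<Rightarrow> real"
  assumes "convex_on UNIV f" "f 0 \<le> 0" "0 \<le> r" "r \<le> 1"
  shows "f (r *\<^sub>R x) \<le> r * f x"
proof -
  have "f (r *\<^sub>R x) \<le> (1 - r) * f 0 + r * f x"
    using convex_onD[OF assms(1), of r 0 x] assms(3,4) by simp
  also have "\<dots> \<le> r * f x"
    using assms(2,4) by (simp add: mult_nonneg_nonpos)
  finally show ?thesis .
qed

lemma concave_on_scaleR_ge:
  fixes f :: "'a::real_vector \<Rightarrow> real"
  assumes "concave_on UNIV f" "0 \<le> f 0" "0 \<le> r" "r \<le> 1"
  shows "r * f x \<le> f (r *\<^sub>R x)"
  using convex_on_scaleR_le[of "\<lambda>x. - f x" r x] assms by (simp add: concave_on_def)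

lemma convex_on_linear:
  assumes "linear f"
  shows "convex_on UNIV f"
  by (rule convex_onI) (simp_all add: linear_add[OF assms] linear_scale[OF assms])

lemma concave_on_linear:
  assumes "linear f"
  shows "concave_on UNIV f"
  unfolding concave_on_def by (rule convex_on_linear) (use assms linear_compose_neg in auto)

lemma z_st_lower:
  assumes "\<forall>u\<in>S. \<forall>i. u $ i \<le> g i x y"
  shows "z_st f1 f2 g S \<le> ereal (f1 x + f2 y)"
  unfolding z_st_def by (rule Inf_lower) (use assms in blast)

lemma z_st_greatest:
  assumes "\<And>x y. \<forall>u\<in>S. \<forall>i. u $ i \<le> g i x y \<Longrightarrow> c \<le> ereal (f1 x + f2 y)"
  shows "c \<le> z_st f1 f2 g S"
  unfolding z_st_def by (rule Inf_greatest) (use assms in blast)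

lemma z_ad_lower:
  assumes "\<forall>u\<in>S. \<forall>i. u $ i \<le> g i x (y u)"
  shows "z_ad f1 f2 g S \<le> ereal (f1 x) + (SUP u\<in>S. ereal (f2 (y u)))"
  unfolding z_ad_def by (rule Inf_lower) (use assms in blast)

lemma z_ad_greatest:
  assumes "\<And>x y. \<forall>u\<in>S. \<forall>i. u $ i \<le> g i x (y u)
             \<Longrightarrow> c \<le> ereal (f1 x) + (SUP u\<in>S. ereal (f2 (y u)))"
  shows "c \<le> z_ad f1 f2 g S"
  unfolding z_ad_def by (rule Inf_greatest) (use assms in blast)

lemma z_st_mono: "S \<subseteq> T \<Longrightarrow> z_st f1 f2 g S \<le> z_st f1 f2 g T"
  by (intro z_st_greatest z_st_lower) blast

lemma z_ad_mono:
  assumes "S \<subseteq> T"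
  shows "z_ad f1 f2 g S \<le> z_ad f1 f2 g T"
proof (rule z_ad_greatest)
  fix x y assume "\<forall>u\<in>T. \<forall>i. u $ i \<le> g i x (y u)"
  then have "z_ad f1 f2 g S \<le> ereal (f1 x) + (SUP u\<in>S. ereal (f2 (y u)))"
    using assms by (intro z_ad_lower) blast
  also have "\<dots> \<le> ereal (f1 x) + (SUP u\<in>T. ereal (f2 (y u)))"
    using assms by (intro add_left_mono SUP_subset_mono) auto
  finally show "z_ad f1 f2 g S \<le> \<dots>" .
qed

lemma z_ad_le_z_st:
  assumes "S \<noteq> {}"
  shows "z_ad f1 f2 g S \<le> z_st f1 f2 g S"
proof (rule z_st_greatest)
  fix x y assume "\<forall>u\<in>S. \<forall>i. u $ i \<le> g i x y"
  then have "z_ad f1 f2 g S \<le> ereal (f1 x) + (SUP u\<in>S. ereal (f2 y))"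
    by (intro z_ad_lower) simp
  then show "z_ad f1 f2 g S \<le> ereal (f1 x + f2 y)"
    using assms by simp
qed

lemma z_ad_pos_imp_positive_point:
  assumes "admissible_data f1 f2 g" "0 < z_ad f1 f2 g S"
  obtains u i where "u \<in> S" "0 < u $ i"
proof (rule ccontr)
  assume "\<not> thesis"
  with that have "\<forall>u\<in>S. \<forall>i. u $ i \<le> g i 0 0"
    using assms(1) unfolding admissible_data_def by (meson order_trans not_le)
  then have "z_ad f1 f2 g S \<le> ereal (f1 0) + (SUP u\<in>S. ereal (f2 0))"
    by (intro z_ad_lower) simp
  also have "\<dots> \<le> 0"
    using assms(1) unfolding admissible_data_def by (cases "S = {}") auto
  finally show False
    using assms(2) by simp
qed

lemma z_st_finite_imp_bdd_above:
  assumes "z_st f1 f2 g S < \<infinity>"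
  shows "bdd_above ((\<lambda>u. u $ i) ` S)"
proof -
  obtain x y where "\<forall>u\<in>S. \<forall>i. u $ i \<le> g i x y"
  proof (rule ccontr)
    assume "\<not> thesis"
    with that have "z_st f1 f2 g S = \<infinity>"
      unfolding z_st_def by (auto simp: top_ereal_def[symmetric])
    with assms show False
      by simp
  qed
  then show ?thesis
    by (intro bdd_aboveI[of _ "g i x y"]) auto
qed

lemma admissible_data_scaled_feasible:
  assumes "admissible_data f1 f2 g" "0 \<le> r" "r \<le> 1"
    and "\<forall>i. u $ i \<le> r * t $ i" "\<forall>i. t $ i \<le> g i x y"
  shows "u $ i \<le> g i (r *\<^sub>R x) (r *\<^sub>R y)"
proof -
  have "u $ i \<le> r * g i x y"
    using assms(2,4,5) by (meson mult_left_mono order_trans)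
  also have "\<dots> \<le> g i (r *\<^sub>R x) (r *\<^sub>R y)"
    using concave_on_scaleR_ge[of "\<lambda>(x, y). g i x y" r "(x, y)"] assms(1-3)
    unfolding admissible_data_def by (simp add: zero_prod_def)
  finally show ?thesis .
qed

lemma z_st_le_scaled:
  assumes data: "admissible_data f1 f2 g" and r: "0 < r" "r \<le> 1"
    and dom: "\<forall>u\<in>S. \<exists>t\<in>T. \<forall>i. u $ i \<le> r * t $ i"
  shows "z_st f1 f2 g S \<le> ereal r * z_st f1 f2 g T"
proof -
  have "z_st f1 f2 g S / ereal r \<le> z_st f1 f2 g T"
  proof (rule z_st_greatest)
    fix x y assume feas: "\<forall>t\<in>T. \<forall>i. t $ i \<le> g i x y"
    have "z_st f1 f2 g S \<le> ereal (f1 (r *\<^sub>R x) + f2 (r *\<^sub>R y))"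
      using dom feas admissible_data_scaled_feasible[OF data less_imp_le[OF r(1)] r(2)]
      by (intro z_st_lower) metis
    also have "\<dots> \<le> ereal r * ereal (f1 x + f2 y)"
      using convex_on_scaleR_le[of f1 r x] convex_on_scaleR_le[of f2 r y] data r
      unfolding admissible_data_def by (simp add: distrib_left)
    finally show "z_st f1 f2 g S / ereal r \<le> ereal (f1 x + f2 y)"
      using r by (simp add: ereal_divide_le_pos)
  qed
  then show ?thesis
    using r by (simp add: ereal_divide_le_pos)
qed

lemma z_ad_le_scaled:
  assumes data: "admissible_data f1 f2 g" and r: "0 < r" "r \<le> 1"
    and dom: "\<forall>u\<in>S. \<exists>t\<in>T. \<forall>i. u $ i \<le> r * t $ i"
  shows "z_ad f1 f2 g S \<le> ereal r * z_ad f1 f2 g T"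
proof -
  obtain sel where sel: "\<And>u. u \<in> S \<Longrightarrow> sel u \<in> T \<and> (\<forall>i. u $ i \<le> r * sel u $ i)"
    using dom by metis
  have "z_ad f1 f2 g S / ereal r \<le> z_ad f1 f2 g T"
  proof (rule z_ad_greatest)
    fix x y assume feas: "\<forall>t\<in>T. \<forall>i. t $ i \<le> g i x (y t)"
    let ?y' = "\<lambda>u. r *\<^sub>R y (sel u)"
    have "z_ad f1 f2 g S \<le> ereal (f1 (r *\<^sub>R x)) + (SUP u\<in>S. ereal (f2 (?y' u)))"
      using sel feas admissible_data_scaled_feasible[OF data less_imp_le[OF r(1)] r(2)]
      by (intro z_ad_lower) metis
    also have "\<dots> \<le> ereal r * ereal (f1 x) + ereal r * (SUP t\<in>T. ereal (f2 (y t)))"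
    proof (intro add_mono SUP_least)
      show "ereal (f1 (r *\<^sub>R x)) \<le> ereal r * ereal (f1 x)"
        using convex_on_scaleR_le[of f1 r x] data r unfolding admissible_data_def by simp
      fix u assume "u \<in> S"
      have "ereal (f2 (?y' u)) \<le> ereal r * ereal (f2 (y (sel u)))"
        using convex_on_scaleR_le[of f2 r "y (sel u)"] data r unfolding admissible_data_def by simp
      also have "\<dots> \<le> ereal r * (SUP t\<in>T. ereal (f2 (y t)))"
        using sel[OF \<open>u \<in> S\<close>] r by (intro ereal_mult_left_mono SUP_upper) auto
      finally show "ereal (f2 (?y' u)) \<le> ereal r * (SUP t\<in>T. ereal (f2 (y t)))" .
    qed
    also have "\<dots> = ereal r * (ereal (f1 x) + (SUP t\<in>T. ereal (f2 (y t))))"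
      using distrib_left_ereal_nn[of r "ereal (f1 x)" "SUP t\<in>T. ereal (f2 (y t))"] r
      by (simp add: mult.commute)
    finally show "z_ad f1 f2 g S / ereal r \<le> ereal (f1 x) + (SUP t\<in>T. ereal (f2 (y t)))"
      using r by (simp add: ereal_divide_le_pos)
  qed
  then show ?thesis
    using r by (simp add: ereal_divide_le_pos)
qed

definition scale_factors :: "(real^'m) set \<Rightarrow> (real^'m) set \<Rightarrow> real set" where
  "scale_factors S1 S2 = {r. 0 \<le> r \<and> S2 \<subseteq> (\<lambda>x. r *\<^sub>R x) ` S1}"

lemma gamma_scale_eq_Inf: "gamma_scale S1 S2 = Inf (scale_factors S1 S2)"
  by (simp add: gamma_scale_def scale_factors_def)

lemma bdd_below_scale_factors: "bdd_below (scale_factors S1 S2)"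
  unfolding scale_factors_def by (rule bdd_belowI[of _ 0]) auto

lemma gamma_scale_mono:
  assumes "S2 \<subseteq> S2'" "scale_factors S1 S2' \<noteq> {}"
  shows "gamma_scale S1 S2 \<le> gamma_scale S1 S2'"
  unfolding gamma_scale_eq_Inf
  using assms by (intro cInf_superset_mono bdd_below_scale_factors) (auto simp: scale_factors_def)

lemma gamma_scale_le:
  assumes "\<And>e. 0 < e \<Longrightarrow> m + e \<in> scale_factors S1 S2"
  shows "gamma_scale S1 S2 \<le> m"
  unfolding gamma_scale_eq_Inf
proof (rule field_le_epsilon)
  fix e :: real assume "0 < e"
  then show "Inf (scale_factors S1 S2) \<le> m + e"
    using assms by (intro cInf_lower bdd_below_scale_factors)
qed

lemma mem_down_closure_product:
  assumes "\<exists>Us. U = {u. \<forall>i. u $ i \<in> Us i}"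
  shows "t \<in> down_closure U \<longleftrightarrow> (\<forall>i. 0 \<le> t $ i \<and> (\<exists>u\<in>U. t $ i \<le> u $ i))"
proof
  assume "\<forall>i. 0 \<le> t $ i \<and> (\<exists>u\<in>U. t $ i \<le> u $ i)"
  then obtain v where v: "\<And>i. 0 \<le> t $ i \<and> v i \<in> U \<and> t $ i \<le> v i $ i"
    by metis
  from assms have "(\<chi> i. v i $ i) \<in> U"
    using v by auto
  then show "t \<in> down_closure U"
    unfolding down_closure_def using v by (auto intro!: bexI[of _ "\<chi> i. v i $ i"])
qed (auto simp: down_closure_def)

lemma proj_box_down_closureD:
  assumes "t \<in> proj_box (down_closure S)"
  shows "0 \<le> t $ i \<and> (\<exists>s\<in>S. t $ i \<le> s $ i)"
proof -
  obtain w where "w \<in> down_closure S" "t $ i = w $ i"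
    using assms unfolding proj_box_def by auto
  then show ?thesis
    unfolding down_closure_def by auto
qed

lemma down_closure_subset_proj_box: "down_closure S \<subseteq> proj_box (down_closure S)"
  unfolding proj_box_def by auto

lemma proj_box_down_closure_subset:
  assumes "\<exists>Us. U = {u. \<forall>i. u $ i \<in> Us i}" "S \<subseteq> U"
  shows "proj_box (down_closure S) \<subseteq> down_closure U"
proof
  fix t assume "t \<in> proj_box (down_closure S)"
  then have "0 \<le> t $ i \<and> (\<exists>u\<in>U. t $ i \<le> u $ i)" for i
    using proj_box_down_closureD assms(2) by blast
  then show "t \<in> down_closure U"
    by (simp add: mem_down_closure_product[OF assms(1)])
qed

lemma gamma_scale_down_closure_le_proj_box:
  assumes "\<exists>Us. U = {u. \<forall>i. u $ i \<in> Us i}" "S \<subseteq> U"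
  shows "gamma_scale (down_closure U) (down_closure S)
           \<le> gamma_scale (down_closure U) (proj_box (down_closure S))"
proof (rule gamma_scale_mono[OF down_closure_subset_proj_box])
  have "1 \<in> scale_factors (down_closure U) (proj_box (down_closure S))"
    using proj_box_down_closure_subset[OF assms] by (simp add: scale_factors_def)
  then show "scale_factors (down_closure U) (proj_box (down_closure S)) \<noteq> {}"
    by blast
qed

lemma down_closure_scaled_dominated:
  assumes "down_closure S \<subseteq> (\<lambda>x. r *\<^sub>R x) ` down_closure T" "0 \<le> r"
    and "u \<in> S" "\<forall>i. 0 \<le> u $ i"
  obtains t where "t \<in> T" "\<forall>i. u $ i \<le> r * t $ i"
proof -
  have "u \<in> down_closure S"
    using assms(3,4) unfolding down_closure_def by auto
  with assms(1) obtain w where w: "w \<in> down_closure T" "u = r *\<^sub>R w"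
    by auto
  then obtain t where "t \<in> T" "\<forall>i. w $ i \<le> t $ i"
    unfolding down_closure_def by auto
  with w(2) assms(2) show thesis
    by (intro that) (auto intro: mult_left_mono)
qed

lemma gamma_scale_proj_box_le:
  assumes U_prod: "\<exists>Us. U = {u. \<forall>i. u $ i \<in> Us i}"
    and U_nonneg: "\<forall>u\<in>U. \<forall>i. 0 \<le> u $ i" and "U \<noteq> {}"
    and bdd: "\<And>i. bdd_above ((\<lambda>u. u $ i) ` U)" and "0 < m"
    and S_le: "\<And>s i. s \<in> S \<Longrightarrow> s $ i \<le> m * Sup ((\<lambda>u. u $ i) ` U)"
  shows "gamma_scale (down_closure U) (proj_box (down_closure S)) \<le> m"
proof (rule gamma_scale_le)
  \<comment> \<open>the slack \<open>e\<close> is needed since the coordinate suprema of \<open>U\<close> need not be attained\<close>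
  fix e :: real assume "0 < e"
  define r where "r = m + e"
  have r: "0 < r" "m < r"
    using \<open>0 < m\<close> \<open>0 < e\<close> by (auto simp: r_def)
  have "t \<in> (\<lambda>x. r *\<^sub>R x) ` down_closure U" if t: "t \<in> proj_box (down_closure S)" for t
  proof -
    have "\<exists>u\<in>U. t $ i / r \<le> u $ i" for i
    proof (cases "t $ i \<le> 0")
      case True
      then show ?thesis
        using \<open>U \<noteq> {}\<close> U_nonneg r(1) by (meson divide_nonpos_pos ex_in_conv order_trans)
    next
      case False
      define B where "B = Sup ((\<lambda>u. u $ i) ` U)"
      obtain s where "s \<in> S" "t $ i \<le> s $ i"
        using proj_box_down_closureD[OF t] by blast
      then have t_le: "t $ i \<le> m * B"
        using S_le unfolding B_def by (meson order_trans)
      with False have "0 < m * B"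
        by linarith
      with \<open>0 < m\<close> have "0 < B"
        by (simp add: zero_less_mult_iff)
      have "t $ i / r \<le> m * B / r"
        using t_le r by (simp add: divide_right_mono)
      also have "\<dots> < B"
        using \<open>0 < B\<close> r by (simp add: pos_divide_less_eq mult.commute)
      finally show ?thesis
        using \<open>U \<noteq> {}\<close> bdd by (auto simp: B_def less_cSup_iff intro: less_imp_le)
    qed
    then have "(1 / r) *\<^sub>R t \<in> down_closure U"
      using proj_box_down_closureD[OF t] r
      by (simp add: mem_down_closure_product[OF U_prod])
    moreover have "t = r *\<^sub>R ((1 / r) *\<^sub>R t)"
      using r by simp
    ultimately show ?thesis
      by blast
  qed
  then show "m + e \<in> scale_factors (down_closure U) (proj_box (down_closure S))"
    using r by (auto simp: scale_factors_def r_def)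
qed

lemma ereal_divide_le_Inf:
  fixes a b :: ereal and R :: "real set"
  assumes "0 < b" "b < \<infinity>" "R \<noteq> {}" "\<And>r. r \<in> R \<Longrightarrow> a \<le> ereal r * b"
  shows "a / b \<le> ereal (Inf R)"
proof -
  have le: "a / b \<le> ereal r" if "r \<in> R" for r
    using assms(1,2) assms(4)[OF that] by (simp add: ereal_divide_le_pos mult.commute)
  show ?thesis
  proof (cases "a / b")
    case (real q)
    then show ?thesis
      using le assms(3) by (auto intro: cInf_greatest)
  next
    case PInf
    then show ?thesis
      using le assms(3) by force
  qed simp
qed

lemma z_ratio_le_gamma_scale:
  fixes U C :: "(real^'m) set"
  assumes U_prod: "\<exists>Us. U = {u. \<forall>i. u $ i \<in> Us i}"
    and U_nonneg: "\<forall>u\<in>U. \<forall>i. 0 \<le> u $ i"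
    and data: "admissible_data f1 f2 g"
    and acp_pos: "0 < z_ad f1 f2 g (U \<inter> C)"
    and ro_fin: "z_st f1 f2 g U < \<infinity>"
  shows "z_st f1 f2 g (U \<inter> C) / z_st f1 f2 g U
           \<le> ereal (gamma_scale (down_closure U) (proj_box (down_closure (U \<inter> C))))"
    and "z_ad f1 f2 g (U \<inter> C) / z_ad f1 f2 g U
           \<le> ereal (gamma_scale (down_closure U) (down_closure (U \<inter> C)))"
proof -
  obtain u0 i0 where u0: "u0 \<in> U \<inter> C" "0 < u0 $ i0"
    using z_ad_pos_imp_positive_point[OF data acp_pos] by blast
  define R where "R = scale_factors (down_closure U) (down_closure (U \<inter> C))"
  have "1 \<in> R"
    using down_closure_subset_proj_box proj_box_down_closure_subset[OF U_prod, of "U \<inter> C"]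
    by (auto simp: R_def scale_factors_def)
  \<comment> \<open>scaling is only available for factors at most 1; beyond that \<open>U \<inter> C \<subseteq> U\<close> suffices\<close>
  have dominated: "0 < r \<and> (\<forall>u\<in>U \<inter> C. \<exists>t\<in>U. \<forall>i. u $ i \<le> min r 1 * t $ i)" if "r \<in> R" for r
  proof -
    have r: "0 \<le> r" "down_closure (U \<inter> C) \<subseteq> (\<lambda>x. r *\<^sub>R x) ` down_closure U"
      using that by (auto simp: R_def scale_factors_def)
    have dom: "\<exists>t\<in>U. \<forall>i. u $ i \<le> r * t $ i" if "u \<in> U \<inter> C" for u
      using down_closure_scaled_dominated[OF r(2,1) that] U_nonneg that by blast
    then obtain t where "\<forall>i. u0 $ i \<le> r * t $ i"
      using u0(1) by blast
    with u0(2) r(1) have "0 < r"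
      by (metis mult_zero_left order_le_less not_le)
    moreover have "\<exists>t\<in>U. \<forall>i. u $ i \<le> min r 1 * t $ i" if "u \<in> U \<inter> C" for u
      using dom[OF that] that by (cases "r \<le> 1") auto
    ultimately show ?thesis
      by blast
  qed
  have "U \<inter> C \<noteq> {}" "U \<noteq> {}"
    using u0 by auto
  then have chain: "z_ad f1 f2 g (U \<inter> C) \<le> z_ad f1 f2 g U" "z_ad f1 f2 g U \<le> z_st f1 f2 g U"
    "z_ad f1 f2 g (U \<inter> C) \<le> z_st f1 f2 g (U \<inter> C)"
    by (auto intro: z_ad_mono z_ad_le_z_st)
  have scaled: "z f1 f2 g (U \<inter> C) \<le> ereal r * z f1 f2 g U"
    if z_scaled: "\<And>r. 0 < r \<Longrightarrow> r \<le> 1 \<Longrightarrow> \<forall>u\<in>U \<inter> C. \<exists>t\<in>U. \<forall>i. u $ i \<le> r * t $ i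
                     \<Longrightarrow> z f1 f2 g (U \<inter> C) \<le> ereal r * z f1 f2 g U"
      and "0 \<le> z f1 f2 g U" "r \<in> R"
    for z :: "_ \<Rightarrow> _ \<Rightarrow> _ \<Rightarrow> (real^'m) set \<Rightarrow> ereal" and r
  proof -
    have "z f1 f2 g (U \<inter> C) \<le> ereal (min r 1) * z f1 f2 g U"
      using dominated[OF \<open>r \<in> R\<close>] by (intro z_scaled) auto
    also have "\<dots> \<le> ereal r * z f1 f2 g U"
      using \<open>0 \<le> z f1 f2 g U\<close> by (intro ereal_mult_right_mono) auto
    finally show ?thesis .
  qed
  have "z_st f1 f2 g (U \<inter> C) / z_st f1 f2 g U \<le> ereal (Inf R)"
  proof (rule ereal_divide_le_Inf)
    show "0 < z_st f1 f2 g U" "z_st f1 f2 g U < \<infinity>"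
      using acp_pos ro_fin chain by (meson order_less_le_trans order_le_less_trans)+
    then show "z_st f1 f2 g (U \<inter> C) \<le> ereal r * z_st f1 f2 g U" if "r \<in> R" for r
      using that by (intro scaled[of z_st, OF z_st_le_scaled[OF data]]) auto
  qed (use \<open>1 \<in> R\<close> in blast)
  also have "Inf R \<le> gamma_scale (down_closure U) (proj_box (down_closure (U \<inter> C)))"
    using gamma_scale_down_closure_le_proj_box[OF U_prod, of "U \<inter> C"]
    by (simp add: R_def gamma_scale_eq_Inf)
  finally show "z_st f1 f2 g (U \<inter> C) / z_st f1 f2 g U
           \<le> ereal (gamma_scale (down_closure U) (proj_box (down_closure (U \<inter> C))))"
    by simp
  have "z_ad f1 f2 g (U \<inter> C) / z_ad f1 f2 g U \<le> ereal (Inf R)"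
  proof (rule ereal_divide_le_Inf)
    show "0 < z_ad f1 f2 g U" "z_ad f1 f2 g U < \<infinity>"
      using acp_pos ro_fin chain by (meson order_less_le_trans order_le_less_trans)+
    then show "z_ad f1 f2 g (U \<inter> C) \<le> ereal r * z_ad f1 f2 g U" if "r \<in> R" for r
      using that by (intro scaled[of z_ad, OF z_ad_le_scaled[OF data]]) auto
  qed (use \<open>1 \<in> R\<close> in blast)
  then show "z_ad f1 f2 g (U \<inter> C) / z_ad f1 f2 g U
           \<le> ereal (gamma_scale (down_closure U) (down_closure (U \<inter> C)))"
    by (simp add: R_def gamma_scale_eq_Inf)
qed

lemma admissible_data_linear:
  "admissible_data (\<lambda>_::real^'n1. 0) (\<lambda>y::real^'n2. y $ k) (\<lambda>i x y. b i * y $ k)"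
proof -
  have "linear (\<lambda>y::real^'n2. y $ k)"
    by (auto intro!: linearI)
  moreover have "linear (\<lambda>(x::real^'n1, y::real^'n2). b i * y $ k)" for i
    by (auto intro!: linearI simp: algebra_simps)
  ultimately show ?thesis
    unfolding admissible_data_def by (auto simp: convex_on_const intro!: convex_on_linear concave_on_linear)
qed

lemma z_st_linear_le:
  assumes "\<forall>u\<in>S. \<forall>i. u $ i \<le> b i * t"
  shows "z_st (\<lambda>_::real^'n1. 0) (\<lambda>y::real^'n2. y $ k) (\<lambda>i x y. b i * y $ k) S \<le> ereal t"
  using z_st_lower[of S "\<lambda>i x y. b i * y $ k" 0 "\<chi> j. t" "\<lambda>_::real^'n1. 0" "\<lambda>y::real^'n2. y $ k"] assms
  by simp

lemma le_z_ad_linear: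
  fixes S :: "(real^'m) set"
  assumes b: "\<And>i. 0 \<le> b i" and c: "\<And>t. \<forall>u\<in>S. \<forall>i. u $ i \<le> b i * t \<Longrightarrow> c \<le> t"
  shows "ereal c \<le> z_ad (\<lambda>_::real^'n1. 0) (\<lambda>y::real^'n2. y $ k) (\<lambda>i x y. b i * y $ k) S"
proof (rule z_ad_greatest)
  fix x :: "real^'n1" and y :: "real^'m \<Rightarrow> real^'n2"
  assume feas: "\<forall>u\<in>S. \<forall>i. u $ i \<le> b i * y u $ k"
  show "ereal c \<le> ereal 0 + (SUP u\<in>S. ereal (y u $ k))"
  proof (cases "SUP u\<in>S. ereal (y u $ k)")
    case (real q)
    have "u $ i \<le> b i * q" if "u \<in> S" for u i
    proof -
      have "y u $ k \<le> q"
        using SUP_upper[OF that, of "\<lambda>u. ereal (y u $ k)"] real by simp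
      then show ?thesis
        using feas that b by (meson mult_left_mono order_trans)
    qed
    then show ?thesis
      using c real by simp
  next
    case MInf
    then have "S = {}"
      using SUP_upper[of _ S "\<lambda>u. ereal (y u $ k)"] by force
    then show ?thesis
      using c[of "c - 1"] by simp
  qed simp
qed

lemma ereal_divide_eq_of_bounds:
  fixes a b :: ereal
  assumes "a / b \<le> ereal c" "ereal c \<le> a" "0 \<le> a" "0 < b" "b \<le> 1"
  shows "a / b = ereal c"
proof -
  obtain b' where b': "b = ereal b'" "0 < b'" "b' \<le> 1"
    using assms(4,5) by (cases b) auto
  obtain a' where a': "a = ereal a'" "0 \<le> a'"
    using assms(1,3) b' by (cases a) auto
  have "a' \<le> a' / b'"
    using a' b' by (simp add: le_divide_eq mult_left_le)
  then show ?thesis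
    using assms(1,2) a' b' by (simp add: antisym)
qed

lemma gamma_scale_bounds_attained:
  fixes U C :: "(real^'m) set"
  assumes U_prod: "\<exists>Us. U = {u. \<forall>i. u $ i \<in> Us i}"
    and U_nonneg: "\<forall>u\<in>U. \<forall>i. 0 \<le> u $ i"
    and bdd: "\<And>i. bdd_above ((\<lambda>u. u $ i) ` U)"
    and u0: "u0 \<in> U \<inter> C" "0 < u0 $ i0"
  shows "\<exists>(f1 :: real^'n1 \<Rightarrow> real) (f2 :: real^'n2 \<Rightarrow> real) g.
           admissible_data f1 f2 g \<and> 0 < z_ad f1 f2 g (U \<inter> C) \<and> z_st f1 f2 g U < \<infinity> \<and>
           z_st f1 f2 g (U \<inter> C) / z_st f1 f2 g U
             = ereal (gamma_scale (down_closure U) (proj_box (down_closure (U \<inter> C)))) \<and>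
           z_ad f1 f2 g (U \<inter> C) / z_ad f1 f2 g U
             = ereal (gamma_scale (down_closure U) (down_closure (U \<inter> C)))"
proof -
  define B where "B i = Sup ((\<lambda>u. u $ i) ` U)" for i
  have B_ge: "u $ i \<le> B i" if "u \<in> U" for u i
    unfolding B_def using bdd that by (intro cSup_upper) auto
  have B_nonneg: "0 \<le> B i" for i
    using B_ge[of u0 i] U_nonneg u0(1) by (meson IntD1 order_trans)
  have "0 < B i0"
    using B_ge[of u0 i0] u0 by simp
  fix k :: 'n2
  define f1 :: "real^'n1 \<Rightarrow> real" where "f1 = (\<lambda>_. 0)"
  define f2 :: "real^'n2 \<Rightarrow> real" where "f2 = (\<lambda>y. y $ k)"
  define g :: "'m \<Rightarrow> real^'n1 \<Rightarrow> real^'n2 \<Rightarrow> real" where "g = (\<lambda>i x y. B i * y $ k)"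
  have data: "admissible_data f1 f2 g"
    unfolding f1_def f2_def g_def by (rule admissible_data_linear)
  have ro_le_1: "z_st f1 f2 g U \<le> 1"
    using z_st_linear_le[of U B 1] B_ge unfolding f1_def f2_def g_def by (simp add: one_ereal_def)
  have "ereal (u0 $ i0 / B i0) \<le> z_ad f1 f2 g (U \<inter> C)"
    unfolding f1_def f2_def g_def
  proof (rule le_z_ad_linear[OF B_nonneg])
    fix t assume "\<forall>u\<in>U \<inter> C. \<forall>i. u $ i \<le> B i * t"
    then have "u0 $ i0 \<le> B i0 * t"
      using u0(1) by blast
    then show "u0 $ i0 / B i0 \<le> t"
      using \<open>0 < B i0\<close> by (simp add: divide_le_eq mult.commute)
  qed
  moreover have "0 < u0 $ i0 / B i0"
    using u0(2) \<open>0 < B i0\<close> by simp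
  ultimately have acp_pos: "0 < z_ad f1 f2 g (U \<inter> C)"
    by (meson ereal_less(2) order_less_le_trans)
  have gamma_le_acp: "ereal (gamma_scale (down_closure U) (proj_box (down_closure (U \<inter> C))))
                        \<le> z_ad f1 f2 g (U \<inter> C)"
    unfolding f1_def f2_def g_def
  proof (rule le_z_ad_linear[OF B_nonneg])
    fix t assume feas: "\<forall>u\<in>U \<inter> C. \<forall>i. u $ i \<le> B i * t"
    have "0 < t"
      using feas u0 B_nonneg[of i0] by (metis mult_nonneg_nonpos not_le order_less_le_trans)
    then show "gamma_scale (down_closure U) (proj_box (down_closure (U \<inter> C))) \<le> t"
      using u0 feas U_nonneg bdd
      by (intro gamma_scale_proj_box_le[OF U_prod]) (auto simp: B_def mult.commute)
  qed
  have "U \<inter> C \<noteq> {}" "U \<noteq> {}"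
    using u0 by auto
  then have chain: "z_ad f1 f2 g (U \<inter> C) \<le> z_ad f1 f2 g U" "z_ad f1 f2 g U \<le> z_st f1 f2 g U"
    "z_ad f1 f2 g (U \<inter> C) \<le> z_st f1 f2 g (U \<inter> C)"
    by (auto intro: z_ad_mono z_ad_le_z_st)
  have ro_fin: "z_st f1 f2 g U < \<infinity>"
    using ro_le_1 by (auto intro: le_less_trans)
  note upper = z_ratio_le_gamma_scale[OF U_prod U_nonneg data acp_pos ro_fin]
  have "z_st f1 f2 g (U \<inter> C) / z_st f1 f2 g U
          = ereal (gamma_scale (down_closure U) (proj_box (down_closure (U \<inter> C))))"
    using upper(1) gamma_le_acp chain acp_pos ro_le_1
    by (intro ereal_divide_eq_of_bounds) (auto intro: order_trans order_less_le_trans)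
  moreover have "z_ad f1 f2 g (U \<inter> C) / z_ad f1 f2 g U
          = ereal (gamma_scale (down_closure U) (down_closure (U \<inter> C)))"
    using upper(2) gamma_scale_down_closure_le_proj_box[OF U_prod, of "U \<inter> C"] gamma_le_acp
      chain acp_pos ro_le_1
    by (intro ereal_divide_eq_of_bounds)
       (auto intro: order_trans order_less_le_trans simp flip: ereal_less_eq(3))
  ultimately show ?thesis
    using data acp_pos ro_fin by blast
qed

theorem theorem9:
  fixes U C :: "(real^'m) set"
    and f1 :: "real^'n1 \<Rightarrow> real" and f2 :: "real^'n2 \<Rightarrow> real"
    and g :: "'m \<Rightarrow> real^'n1 \<Rightarrow> real^'n2 \<Rightarrow> real"
  assumes U_prod: "\<exists>Us :: 'm \<Rightarrow> real set. U = {u. \<forall>i. u $ i \<in> Us i}"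
    and U_nonneg: "\<forall>u\<in>U. \<forall>i. 0 \<le> u $ i"
    and U_convex: "convex U"
    and data: "admissible_data f1 f2 g"
    and acp_pos: "z_ad f1 f2 g (U \<inter> C) > 0"
    and ro_fin: "z_st f1 f2 g U < \<infinity>"
  shows "z_st f1 f2 g (U \<inter> C) / z_st f1 f2 g U
            \<le> ereal (gamma_scale (down_closure U) (proj_box (down_closure (U \<inter> C))))
       \<and> z_ad f1 f2 g (U \<inter> C) / z_ad f1 f2 g U
            \<le> ereal (gamma_scale (down_closure U) (down_closure (U \<inter> C)))
       \<and> (\<exists>(f1' :: real^'n1 \<Rightarrow> real) (f2' :: real^'n2 \<Rightarrow> real) g'.
            admissible_data f1' f2' g' \<and> z_ad f1' f2' g' (U \<inter> C) > 0 \<and> z_st f1' f2' g' U < \<infinity> \<and>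
            z_st f1' f2' g' (U \<inter> C) / z_st f1' f2' g' U
              = ereal (gamma_scale (down_closure U) (proj_box (down_closure (U \<inter> C)))))
       \<and> (\<exists>(f1' :: real^'n1 \<Rightarrow> real) (f2' :: real^'n2 \<Rightarrow> real) g'.
            admissible_data f1' f2' g' \<and> z_ad f1' f2' g' (U \<inter> C) > 0 \<and> z_st f1' f2' g' U < \<infinity> \<and>
            z_ad f1' f2' g' (U \<inter> C) / z_ad f1' f2' g' U
              = ereal (gamma_scale (down_closure U) (down_closure (U \<inter> C))))"
proof -
  obtain u0 i0 where u0: "u0 \<in> U \<inter> C" "0 < u0 $ i0"
    using z_ad_pos_imp_positive_point[OF data acp_pos] by blast
  have bdd: "bdd_above ((\<lambda>u. u $ i) ` U)" for i
    using z_st_finite_imp_bdd_above[OF ro_fin] .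
  show ?thesis
    using z_ratio_le_gamma_scale[OF U_prod U_nonneg data acp_pos ro_fin]
      gamma_scale_bounds_attained[OF U_prod U_nonneg bdd u0]
    by blast
qed

end
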